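(* Let $K\ge 2$ and $p\in(0,1)$. For every $f\in\mathcal M_p$ with $\sigma_f$ equal to the identity, $$\sum_{r=1}^{K-1}D(f,r)\;\le\;C(K,p):=\sum_{r=1}^{K-2}\frac{(1-p)p^{K-r}}{(K-r)p^{K-r+1}-(K-r+1)p^{K-r}+1}+\frac{1+p}{1-p},$$ with equality when $f=f^{\mathrm{OA}}_{\mathrm{id}}$. Consequently $\min_{f}I^{\mathrm N}(f)=I^{\mathrm N}(f^{\mathrm{OA}}_{\mathrm{id}})=\log(1/p)/C(K,p)$ (minimum over $f\in\mathcal M_p$ with identity ranking), and moreover $$\frac{\log(1/p)}{C(K,p)}=(1-p)\log\!\Big(\frac1p\Big)\Big(1+\sum_{j=2}^{K}\frac{p^{j-1}}{1+2p+\cdots+(j-1)p^{j-2}}\Big)^{-1}.$$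
   Context: Items are $[K]=\{1,\dots,K\}$, $\mathcal S=\{S\subseteq[K]:|S|\ge2\}$, and $[n]=\{1,\dots,n\}$. A preference $f$ is a family of numbers $f(i\mid S)$, $S\in\mathcal S$, $i\in[K]$. For $p\in(0,1)$, the $p$-Separable family $\mathcal M_p$ consists of all $f$ such that (i) $f(i\mid S)>0$ iff $i\in S$; (ii) $\sum_{i\in S}f(i\mid S)=1$; (iii) there is a bijection $\sigma_f:[K]\to[K]$ (the ranking) such that for all $S\in\mathcal S$ and $i,i'\in S$ with $\sigma_f(i')<\sigma_f(i)$, $f(i\mid S)\le p\,f(i'\mid S)$. When $\sigma_f$ is the identity this says $f(i\mid S)\le p f(i'\mid S)$ whenever $i'<i$ in $S$. Hardness quantity (for $\sigma_f$ the identity): for $r\in[K-1]$, $i\in[r-1]$ let $\Delta^i_{K-r+1}=f(K-r+1\mid[K-i+1])-f(K-r+2\mid[K-i+1])$; $D(f,1)=\frac{1}{1-Kf(K\mid[K])}$ and for $r\in\{2,\dots,K-1\}$, $D(f,r)=\frac{(K-r+1)\sum_{i=1}^{r-1}\Delta^i_{K-r+1}D(f,i)}{1-(K-r+1)f(K-r+1\mid[K-r+1])}$; $I^{\mathrm N}(f)=\log(1/p)\big[\sum_{r=1}^{K-1}D(f,r)\big]^{-1}$. Ordinal Attraction (OA) preference: for a bijection $\sigma:[K]\to[K]$ and $S\in\mathcal S$, $i\in S$, let $\sigma(i\mid S)=1+|\{j\in S:\sigma(j)<\sigma(i)\}|$ be the local rank of $i$ in $S$, and $f^{\mathrm{OA}}_\sigma(i\mid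 S)=\frac{1-p}{1-p^{|S|}}p^{\sigma(i\mid S)-1}$ for $i\in S$ (and $0$ for $i\notin S$). $f^{\mathrm{OA}}_{\mathrm{id}}$ denotes the OA preference for the identity ranking. *)

theory Defs
  imports Complex_Main
begin

text \<open>Items are 1..K; a preference is f :: nat => nat set => real, f i S = f(i | S).\<close>

definition choice_sets :: "nat \<Rightarrow> nat set set" where
  "choice_sets K = {S. S \<subseteq> {1..K} \<and> 2 \<le> card S}"

definition separable_wrt :: "real \<Rightarrow> nat \<Rightarrow> (nat \<Rightarrow> nat set \<Rightarrow> real) \<Rightarrow> (nat \<Rightarrow> nat) \<Rightarrow> bool" where
  "separable_wrt p K f \<sigma> \<longleftrightarrow>
     (\<forall>S\<in>choice_sets K. \<forall>i\<in>S. \<forall>i'\<in>S. \<sigma> i' < \<sigma> i \<longrightarrow> f i S \<le> p * f i' S)"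

definition in_Mp :: "real \<Rightarrow> nat \<Rightarrow> (nat \<Rightarrow> nat set \<Rightarrow> real) \<Rightarrow> bool" where
  "in_Mp p K f \<longleftrightarrow>
     (\<forall>S\<in>choice_sets K. \<forall>i\<in>{1..K}. (0 < f i S \<longleftrightarrow> i \<in> S)) \<and>
     (\<forall>S\<in>choice_sets K. (\<Sum>i\<in>S. f i S) = 1) \<and>
     (\<exists>\<sigma>. bij_betw \<sigma> {1..K} {1..K} \<and> separable_wrt p K f \<sigma>)"

text \<open>Delta^i_{K-r+1} = f(K-r+1 | [K-i+1]) - f(K-r+2 | [K-i+1]).\<close>
definition Delta :: "nat \<Rightarrow> (nat \<Rightarrow> nat set \<Rightarrow> real) \<Rightarrow> nat \<Rightarrow> nat \<Rightarrow> real" where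
  "Delta K f i r = f (K - r + 1) {1..K - i + 1} - f (K - r + 2) {1..K - i + 1}"

function D :: "nat \<Rightarrow> (nat \<Rightarrow> nat set \<Rightarrow> real) \<Rightarrow> nat \<Rightarrow> real" where
  "D K f r =
     (if r \<le> 1 then 1 / (1 - real K * f K {1..K})
      else (real (K - r + 1) * (\<Sum>i\<in>{1..r-1}. Delta K f i r * D K f i))
           / (1 - real (K - r + 1) * f (K - r + 1) {1..K - r + 1}))"
  by pat_completeness auto
termination by (relation "measure (\<lambda>(K, f, r). r)") auto

declare D.simps [simp del]

definition I_N :: "real \<Rightarrow> nat \<Rightarrow> (nat \<Rightarrow> nat set \<Rightarrow> real) \<Rightarrow> real" where
  "I_N p K f = ln (1 / p) / (\<Sum>r\<in>{1..K-1}. D K f r)"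

definition local_rank :: "(nat \<Rightarrow> nat) \<Rightarrow> nat \<Rightarrow> nat set \<Rightarrow> nat" where
  "local_rank \<sigma> i S = 1 + card {j\<in>S. \<sigma> j < \<sigma> i}"

definition f_OA :: "real \<Rightarrow> (nat \<Rightarrow> nat) \<Rightarrow> nat \<Rightarrow> nat set \<Rightarrow> real" where
  "f_OA p \<sigma> i S =
     (if i \<in> S then (1 - p) / (1 - p ^ card S) * p ^ (local_rank \<sigma> i S - 1) else 0)"

definition C_const :: "nat \<Rightarrow> real \<Rightarrow> real" where
  "C_const K p =
     (\<Sum>r\<in>{1..K-2}. (1 - p) * p ^ (K - r) /
        (real (K - r) * p ^ (K - r + 1) - real (K - r + 1) * p ^ (K - r) + 1))
     + (1 + p) / (1 - p)"

end

theory Submission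
  imports Defs
begin

text \<open>
  Reversing the order of summation turns the top-down recursion defining D into a bottom-up
  recursion D_dual driven by the choice probabilities w_m = f(_ | [m]) of the nested sets [m],
  and sum_r D(f,r) = D_dual_K / K.  Given D_dual_k <= k C(k,p) for k < m, the next value is
  bounded through a linear functional sep_form of w_m.  On the cone of nonnegative vectors with
  w_(j+1) <= p w_j this functional is at most C(m,p) sum_j w_j: equality holds on the geometric
  vector (p^(j-1)), and subtracting the largest admissible multiple of it leaves a vector of the
  cone supported on [m-1].  The OA preference restricts to normalized geometric vectors, so
  every bound is attained.
\<close>

definition geom_sum :: "real \<Rightarrow> nat \<Rightarrow> real" where
  "geom_sum p n = (\<Sum>j<n. p ^ j)"

definition dgeom_sum :: "real \<Rightarrow> nat \<Rightarrow> real" where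
  "dgeom_sum p n = (\<Sum>m\<in>{1..n}. real m * p ^ (m - 1))"

definition oa_C :: "real \<Rightarrow> nat \<Rightarrow> real" where
  "oa_C p n = (1 + (\<Sum>j\<in>{2..n}. p ^ (j - 1) / dgeom_sum p (j - 1))) / (1 - p)"

definition oa_B :: "real \<Rightarrow> nat \<Rightarrow> real" where
  "oa_B p n = real n * oa_C p n"

lemma geom_sum_Suc: "geom_sum p (Suc n) = geom_sum p n + p ^ n"
  by (simp add: geom_sum_def)

lemma one_minus_mult_geom_sum: "(1 - p) * geom_sum p n = 1 - p ^ n"
  by (simp add: geom_sum_def one_diff_power_eq)

lemma geom_sum_eq: "p \<noteq> 1 \<Longrightarrow> geom_sum p n = (1 - p ^ n) / (1 - p)"
  using one_minus_mult_geom_sum[of p n] by (simp add: field_simps)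

lemma geom_sum_eq_sum_power_pred: "geom_sum p n = (\<Sum>j\<in>{1..n}. p ^ (j - 1))"
  by (induction n) (auto simp: geom_sum_Suc atLeastAtMostSuc_conv geom_sum_def[of p 0])

lemma geom_sum_pos: "0 < p \<Longrightarrow> 1 \<le> n \<Longrightarrow> 0 < geom_sum p n"
  unfolding geom_sum_def by (rule sum_pos2[where i = 0]) auto

lemma dgeom_sum_Suc: "dgeom_sum p (Suc n) = dgeom_sum p n + real (Suc n) * p ^ n"
  by (simp add: dgeom_sum_def)

lemma geom_sum_minus_dgeom_sum: "geom_sum p n - real n * p ^ n = (1 - p) * dgeom_sum p n"
  by (induction n) (simp_all add: geom_sum_Suc dgeom_sum_Suc algebra_simps geom_sum_def[of p 0] dgeom_sum_def[of p 0])

lemma dgeom_sum_pos: "0 < p \<Longrightarrow> 1 \<le> n \<Longrightarrow> 0 < dgeom_sum p n"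
  unfolding dgeom_sum_def by (rule sum_pos2[where i = 1]) auto

lemma dgeom_sum_closed_form:
  "(1 - p)\<^sup>2 * dgeom_sum p n = real n * p ^ (n + 1) - real (n + 1) * p ^ n + 1"
proof -
  have "(1 - p)\<^sup>2 * dgeom_sum p n = (1 - p) * (geom_sum p n - real n * p ^ n)"
    by (simp add: geom_sum_minus_dgeom_sum power2_eq_square)
  also have "\<dots> = (1 - p) * geom_sum p n - (1 - p) * real n * p ^ n"
    by (simp add: algebra_simps)
  also have "\<dots> = 1 - p ^ n - (1 - p) * real n * p ^ n"
    by (simp only: one_minus_mult_geom_sum)
  finally show ?thesis
    by (simp add: algebra_simps)
qed

lemma oa_C_2: "oa_C p 2 = (1 + p) / (1 - p)"
  by (simp add: oa_C_def dgeom_sum_def)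

lemma oa_C_Suc:
  assumes "1 \<le> n"
  shows "oa_C p (Suc n) = oa_C p n + p ^ n / ((1 - p) * dgeom_sum p n)"
proof -
  have "{2..Suc n} = insert (Suc n) {2..n}"
    using assms by auto
  then show ?thesis
    by (simp add: oa_C_def add_divide_distrib)
qed

lemma oa_C_mono: "0 < p \<Longrightarrow> p < 1 \<Longrightarrow> 1 \<le> n \<Longrightarrow> oa_C p n \<le> oa_C p (Suc n)"
  by (simp add: oa_C_Suc dgeom_sum_pos less_imp_le)

lemma one_le_oa_C:
  assumes "0 < p" "p < 1"
  shows "1 \<le> oa_C p n"
proof -
  have "0 \<le> (\<Sum>j\<in>{2..n}. p ^ (j - 1) / dgeom_sum p (j - 1))"
    using assms by (intro sum_nonneg) (auto intro!: divide_nonneg_pos dgeom_sum_pos)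
  then show ?thesis
    using assms by (simp add: oa_C_def field_simps)
qed

text \<open>The numerator of the D_dual recursion with every earlier value D_dual_k replaced by its
  extremal value oa_B p k, and with the term oa_B p m * g m of the denominator moved over
  (see D_dual_eq_sep_form).\<close>

definition sep_form :: "real \<Rightarrow> nat \<Rightarrow> (nat \<Rightarrow> real) \<Rightarrow> real" where
  "sep_form p m g =
     (\<Sum>j\<in>{1..m}. g j) + (\<Sum>k\<in>{2..<m}. oa_B p k * (g k - g (Suc k))) + oa_B p m * g m"

lemma sep_form_cong:
  assumes "\<And>j. j \<in> {1..m} \<Longrightarrow> g j = h j"
  shows "sep_form p m g = sep_form p m h"
proof (cases "m = 0")
  case False
  with assms show ?thesis
    unfolding sep_form_def by (intro arg_cong2[where f = "(+)"] sum.cong) auto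
qed (simp add: sep_form_def oa_B_def)

lemma sep_form_add: "sep_form p m (\<lambda>j. g j + h j) = sep_form p m g + sep_form p m h"
proof -
  have "(\<Sum>k\<in>{2..<m}. oa_B p k * (g k + h k - (g (Suc k) + h (Suc k)))) =
    (\<Sum>k\<in>{2..<m}. oa_B p k * (g k - g (Suc k))) + (\<Sum>k\<in>{2..<m}. oa_B p k * (h k - h (Suc k)))"
    by (simp add: sum.distrib[symmetric] algebra_simps)
  then show ?thesis
    by (simp add: sep_form_def sum.distrib algebra_simps)
qed

lemma sep_form_scale: "sep_form p m (\<lambda>j. c * g j) = c * sep_form p m g"
  by (simp add: sep_form_def sum_distrib_left algebra_simps)

lemma sep_form_Suc:
  assumes "2 \<le> m"
  shows "sep_form p (Suc m) g = sep_form p m g + (1 + oa_B p (Suc m) - oa_B p m) * g (Suc m)"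
  using assms by (simp add: sep_form_def atLeastLessThanSuc atLeastAtMostSuc_conv algebra_simps)

lemma sep_form_geom:
  assumes "0 < p" "p < 1" "2 \<le> m"
  shows "sep_form p m (\<lambda>j. p ^ (j - 1)) = oa_C p m * geom_sum p m"
  using assms(3)
proof (induction m rule: nat_induct_at_least)
  case base
  have "sep_form p 2 (\<lambda>j. p ^ (j - 1)) = 1 + p + 2 * oa_C p 2 * p"
    by (simp add: sep_form_def oa_B_def numeral_2_eq_2)
  moreover have "geom_sum p 2 = 1 + p"
    by (simp add: geom_sum_def numeral_2_eq_2)
  ultimately show ?case
    using assms by (simp add: oa_C_2 field_simps)
next
  case (Suc m)
  have "(oa_C p (Suc m) - oa_C p m) * (geom_sum p m - real m * p ^ m) = p ^ m"
    using assms Suc.hyps dgeom_sum_pos[of p m]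
    by (simp add: oa_C_Suc geom_sum_minus_dgeom_sum)
  with Suc show ?case
    by (simp add: sep_form_Suc geom_sum_Suc oa_B_def algebra_simps)
qed

lemma ratio_chain_le:
  fixes g :: "nat \<Rightarrow> real"
  assumes "0 \<le> p" "\<forall>j\<in>{1..<n}. g (Suc j) \<le> p * g j" "j \<in> {1..n}"
  shows "g n \<le> p ^ (n - j) * g j"
  using assms(3)
proof (induction "n - j" arbitrary: j)
  case (Suc k)
  then have j: "1 \<le> j" "j < n"
    by auto
  have "g n \<le> p ^ (n - Suc j) * g (Suc j)"
    using Suc by (intro Suc.hyps) auto
  also have "\<dots> \<le> p ^ (n - Suc j) * (p * g j)"
    using assms j by (intro mult_left_mono) auto
  also have "\<dots> = p ^ (n - j) * g j"
    using j by (metis Suc_diff_Suc mult.assoc power_Suc2)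
  finally show ?case .
qed simp

lemma ratio_cone_peel:
  fixes g :: "nat \<Rightarrow> real"
  assumes p: "0 < p" and nonneg: "\<forall>j\<in>{1..m}. 0 \<le> g j"
    and ratio: "\<forall>j\<in>{1..<m}. g (Suc j) \<le> p * g j"
  obtains h c where "g = (\<lambda>j. h j + c * p ^ (j - 1))" "\<forall>j\<in>{1..m}. 0 \<le> h j" "h m = 0"
    "\<forall>j\<in>{1..<m}. h (Suc j) \<le> p * h j"
proof
  define c where "c = g m / p ^ (m - 1)"
  show "g = (\<lambda>j. (g j - c * p ^ (j - 1)) + c * p ^ (j - 1))"
    by simp
  show "g m - c * p ^ (m - 1) = 0"
    using p by (simp add: c_def)
  show "\<forall>j\<in>{1..m}. 0 \<le> g j - c * p ^ (j - 1)"
  proof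
    fix j assume j: "j \<in> {1..m}"
    have "g m \<le> p ^ (m - j) * g j"
      using ratio_chain_le[of p m g j] p ratio j by simp
    moreover have "p ^ (m - 1) = p ^ (m - j) * p ^ (j - 1)"
      using j by (simp add: power_add[symmetric])
    ultimately have "c * p ^ (j - 1) \<le> g j"
      using p by (simp add: c_def field_simps)
    then show "0 \<le> g j - c * p ^ (j - 1)"
      by simp
  qed
  show "\<forall>j\<in>{1..<m}. g (Suc j) - c * p ^ (Suc j - 1) \<le> p * (g j - c * p ^ (j - 1))"
  proof
    fix j assume j: "j \<in> {1..<m}"
    then have "p ^ (Suc j - 1) = p * p ^ (j - 1)"
      by (cases j) auto
    with ratio j show "g (Suc j) - c * p ^ (Suc j - 1) \<le> p * (g j - c * p ^ (j - 1))"
      by (auto simp: algebra_simps)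
  qed
qed

lemma sep_form_le:
  fixes g :: "nat \<Rightarrow> real"
  assumes p: "0 < p" "p < 1"
  shows "2 \<le> m \<Longrightarrow> \<forall>j\<in>{1..m}. 0 \<le> g j \<Longrightarrow> \<forall>j\<in>{1..<m}. g (Suc j) \<le> p * g j \<Longrightarrow>
    sep_form p m g \<le> oa_C p m * (\<Sum>j\<in>{1..m}. g j)"
proof (induction m arbitrary: g rule: less_induct)
  case (less m)
  obtain h c where g: "g = (\<lambda>j. h j + c * p ^ (j - 1))" and h_nonneg: "\<forall>j\<in>{1..m}. 0 \<le> h j"
    and h_m: "h m = 0" and h_ratio: "\<forall>j\<in>{1..<m}. h (Suc j) \<le> p * h j"
    by (rule ratio_cone_peel[OF p(1) less.prems(2,3)])
  have h_le: "sep_form p m h \<le> oa_C p m * (\<Sum>j\<in>{1..m}. h j)"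
  proof (cases "m = 2")
    case True
    then have "sep_form p m h = h 1" "(\<Sum>j\<in>{1..m}. h j) = h 1"
      using h_m by (simp_all add: sep_form_def atLeastAtMostSuc_conv numeral_2_eq_2)
    moreover have "0 \<le> h 1"
      using True h_nonneg by simp
    ultimately show ?thesis
      using one_le_oa_C[OF p] by (simp add: mult_le_cancel_right1)
  next
    case False
    then obtain k where m: "m = Suc k" "2 \<le> k"
      using less.prems(1) by (cases m) auto
    have "sep_form p m h = sep_form p k h"
      using m h_m by (simp add: sep_form_Suc)
    also have "\<dots> \<le> oa_C p k * (\<Sum>j\<in>{1..k}. h j)"
      using m h_nonneg h_ratio by (intro less.IH) auto
    also have "\<dots> \<le> oa_C p m * (\<Sum>j\<in>{1..k}. h j)"
      using m h_nonneg oa_C_mono[OF p, of k] by (intro mult_right_mono sum_nonneg) auto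
    also have "(\<Sum>j\<in>{1..k}. h j) = (\<Sum>j\<in>{1..m}. h j)"
      using m h_m by simp
    finally show ?thesis .
  qed
  have "sep_form p m g = sep_form p m h + c * (oa_C p m * geom_sum p m)"
    using sep_form_geom[OF p less.prems(1)] by (simp add: g sep_form_add sep_form_scale)
  also have "\<dots> \<le> oa_C p m * (\<Sum>j\<in>{1..m}. h j) + c * (oa_C p m * geom_sum p m)"
    using h_le by simp
  also have "\<dots> = oa_C p m * (\<Sum>j\<in>{1..m}. g j)"
    by (simp add: g sum.distrib sum_distrib_left geom_sum_eq_sum_power_pred algebra_simps)
  finally show ?case .
qed

function D_dual :: "(nat \<Rightarrow> nat \<Rightarrow> real) \<Rightarrow> nat \<Rightarrow> real" where
  "D_dual g m = real m * (1 + (\<Sum>k\<in>{2..<m}. D_dual g k * (g m k - g m (Suc k)))) / (1 - real m * g m m)"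
  by pat_completeness auto
termination by (relation "measure (\<lambda>(g, m). m)") auto

declare D_dual.simps [simp del]

lemma sum_triangle_swap:
  fixes F :: "nat \<Rightarrow> nat \<Rightarrow> 'a::comm_monoid_add"
  shows "(\<Sum>n\<in>{2..K}. \<Sum>j\<in>{2..<n}. F n j) = (\<Sum>j\<in>{2..<K}. \<Sum>n\<in>{j<..K}. F n j)"
proof -
  have "(\<Sum>n\<in>{2..K}. \<Sum>j\<in>{2..<n}. F n j) = (\<Sum>n\<in>{2..K}. \<Sum>j\<in>{j\<in>{2..<K}. j < n}. F n j)"
    by (intro sum.cong refl) auto
  also have "\<dots> = (\<Sum>j\<in>{2..<K}. \<Sum>n\<in>{n\<in>{2..K}. j < n}. F n j)"
    by (rule sum.swap_restrict) auto
  also have "\<dots> = (\<Sum>j\<in>{2..<K}. \<Sum>n\<in>{j<..K}. F n j)"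
    by (intro sum.cong refl) auto
  finally show ?thesis .
qed

lemma sum_eq_of_transposed_recursions:
  fixes E a u :: "nat \<Rightarrow> real" and c :: "nat \<Rightarrow> nat \<Rightarrow> real"
  assumes K: "2 \<le> K"
    and E: "\<And>n. n \<in> {2..<K} \<Longrightarrow> E n = a n * (\<Sum>m\<in>{n<..K}. c m n * E m)"
    and u: "\<And>k. k \<in> {2..K} \<Longrightarrow> u k = 1 + (\<Sum>j\<in>{2..<k}. a j * u j * c k j)"
  shows "(\<Sum>n\<in>{2..K}. E n) = E K * u K"
proof -
  have "E n * u n = E n + (\<Sum>j\<in>{2..<n}. E n * (a j * u j * c n j))" if "n \<in> {2..K}" for n
    using u[OF that] by (simp add: distrib_left sum_distrib_left)
  then have "(\<Sum>n\<in>{2..K}. E n * u n) = (\<Sum>n\<in>{2..K}. E n) + (\<Sum>n\<in>{2..K}. \<Sum>j\<in>{2..<n}. E n * (a j * u j * c n j))"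
    by (simp add: sum.distrib)
  also have "(\<Sum>n\<in>{2..K}. \<Sum>j\<in>{2..<n}. E n * (a j * u j * c n j)) =
      (\<Sum>j\<in>{2..<K}. \<Sum>n\<in>{j<..K}. E n * (a j * u j * c n j))"
    by (rule sum_triangle_swap)
  also have "\<dots> = (\<Sum>j\<in>{2..<K}. E j * u j)"
  proof (intro sum.cong refl)
    fix j assume "j \<in> {2..<K}"
    show "(\<Sum>n\<in>{j<..K}. E n * (a j * u j * c n j)) = E j * u j"
      by (simp add: E[OF \<open>j \<in> {2..<K}\<close>] sum_distrib_left sum_distrib_right algebra_simps)
  qed
  finally have "(\<Sum>n\<in>{2..K}. E n * u n) = (\<Sum>n\<in>{2..K}. E n) + (\<Sum>j\<in>{2..<K}. E j * u j)" .
  moreover have "{2..K} = insert K {2..<K}"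
    using K by auto
  ultimately show ?thesis
    by simp
qed

lemma D_reversed:
  assumes n: "n \<in> {2..<K}"
  shows "D K f (K - n + 1) = real n / (1 - real n * f n {1..n})
    * (\<Sum>m\<in>{n<..K}. (f n {1..m} - f (Suc n) {1..m}) * D K f (K - m + 1))"
proof -
  have "(\<Sum>i\<in>{1..K - n}. Delta K f i (K - n + 1) * D K f i) =
      (\<Sum>m\<in>{n<..K}. (f n {1..m} - f (Suc n) {1..m}) * D K f (K - m + 1))"
  proof (rule sum.reindex_bij_witness[where i = "\<lambda>m. K - m + 1" and j = "\<lambda>i. K - i + 1"])
    fix i assume "i \<in> {1..K - n}"
    then have "K - (K - i + 1) + 1 = i" "K - (K - n + 1) + 1 = n" "K - (K - n + 1) + 2 = Suc n"
      "Suc (K - Suc (K - i)) = i"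
      using n by auto
    then show "(f n {1..K - i + 1} - f (Suc n) {1..K - i + 1}) * D K f (K - (K - i + 1) + 1) =
        Delta K f i (K - n + 1) * D K f i"
      by (simp add: Delta_def)
  qed (use n in auto)
  moreover have "\<not> K - n + 1 \<le> 1" "K - (K - n + 1) + 1 = n"
    using n by auto
  ultimately show ?thesis
    by (subst D.simps) simp
qed

lemma sum_D_eq_D_dual:
  assumes K: "2 \<le> K"
  shows "(\<Sum>r\<in>{1..K-1}. D K f r) = D_dual (\<lambda>m j. f j {1..m}) K / real K"
proof -
  define g where "g = (\<lambda>m j. f j {1..m})"
  define E where "E = (\<lambda>n. D K f (K - n + 1))"
  define a where "a = (\<lambda>n. real n / (1 - real n * g n n))"
  define c where "c = (\<lambda>m n. g m n - g m (Suc n))"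
  define u where "u = (\<lambda>k. 1 + (\<Sum>j\<in>{2..<k}. D_dual g j * c k j))"
  have D_dual_au: "D_dual g k = a k * u k" for k
    by (subst D_dual.simps) (simp add: a_def u_def c_def)
  have "(\<Sum>r\<in>{1..K-1}. D K f r) = (\<Sum>n\<in>{2..K}. E n)"
    by (rule sum.reindex_bij_witness[where i = "\<lambda>n. K - n + 1" and j = "\<lambda>r. K - r + 1"])
      (use K in \<open>auto simp: E_def\<close>)
  also have "\<dots> = E K * u K"
  proof (rule sum_eq_of_transposed_recursions[OF K, where a = a and c = c])
    show "E n = a n * (\<Sum>m\<in>{n<..K}. c m n * E m)" if "n \<in> {2..<K}" for n
      unfolding E_def a_def c_def g_def by (rule D_reversed[OF that])
  qed (simp only: D_dual_au[symmetric], simp add: u_def)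
  also have "\<dots> = D_dual g K / real K"
  proof -
    have "E K = 1 / (1 - real K * g K K)"
      by (simp add: E_def D.simps g_def)
    with K show ?thesis
      by (simp add: D_dual_au a_def)
  qed
  finally show ?thesis
    by (simp add: g_def)
qed

definition sep_weights :: "real \<Rightarrow> nat \<Rightarrow> (nat \<Rightarrow> real) \<Rightarrow> bool" where
  "sep_weights p m w \<longleftrightarrow>
     (\<forall>j\<in>{1..m}. 0 < w j) \<and> (\<forall>j\<in>{1..<m}. w (Suc j) \<le> p * w j) \<and> (\<Sum>j\<in>{1..m}. w j) = 1"

lemma sep_weights_restriction:
  assumes "in_Mp p K f" "separable_wrt p K f id" "m \<in> {2..K}"
  shows "sep_weights p m (\<lambda>j. f j {1..m})"
proof -
  have S: "{1..m} \<in> choice_sets K"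
    using assms(3) by (auto simp: choice_sets_def)
  with assms show ?thesis
    unfolding sep_weights_def in_Mp_def separable_wrt_def by auto
qed

lemma sep_weights_last_lt:
  assumes p: "0 < p" "p < 1" and w: "sep_weights p m w" and m: "2 \<le> m"
  shows "real m * w m < 1"
proof -
  have pos: "\<forall>j\<in>{1..m}. 0 < w j" and ratio: "\<forall>j\<in>{1..<m}. w (Suc j) \<le> p * w j"
    and sum: "(\<Sum>j\<in>{1..m}. w j) = 1"
    using w by (simp_all add: sep_weights_def)
  have le: "w m \<le> w j" if j: "j \<in> {1..m}" for j
  proof -
    have "w m \<le> p ^ (m - j) * w j"
      using ratio_chain_le[of p m w j] p ratio j by simp
    also have "\<dots> \<le> w j"
      using pos j p by (intro mult_left_le_one_le power_le_one) (auto simp: less_imp_le)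
    finally show ?thesis .
  qed
  have "w m \<le> p ^ (m - 1) * w 1"
    using ratio_chain_le[of p m w 1] p ratio m by simp
  also have "\<dots> < 1 * w 1"
    using pos m p by (intro mult_strict_right_mono) (auto simp: power_less_one_iff)
  finally have "(\<Sum>j\<in>{1..m}. w m) < (\<Sum>j\<in>{1..m}. w j)"
    using le m by (intro sum_strict_mono_ex1) (auto intro: bexI[of _ 1])
  with sum show ?thesis
    by simp
qed

lemma D_dual_eq_sep_form:
  assumes "(\<Sum>j\<in>{1..m}. g m j) = 1"
  shows "D_dual g m = real m * (sep_form p m (g m) - oa_B p m * g m m
    + (\<Sum>k\<in>{2..<m}. (D_dual g k - oa_B p k) * (g m k - g m (Suc k)))) / (1 - real m * g m m)"
proof -
  have "1 + (\<Sum>k\<in>{2..<m}. D_dual g k * (g m k - g m (Suc k))) = sep_form p m (g m) - oa_B p m * g m m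
    + (\<Sum>k\<in>{2..<m}. (D_dual g k - oa_B p k) * (g m k - g m (Suc k)))"
    using assms by (simp add: sep_form_def left_diff_distrib sum_subtractf)
  then show ?thesis
    by (subst D_dual.simps) simp
qed

lemma D_dual_bounds:
  assumes p: "0 < p" "p < 1" and w: "\<forall>k\<in>{2..K}. sep_weights p k (g k)"
  shows "m \<in> {2..K} \<Longrightarrow> 0 < D_dual g m \<and> D_dual g m \<le> oa_B p m"
proof (induction m rule: less_induct)
  case (less m)
  have m: "2 \<le> m" and wm: "sep_weights p m (g m)"
    using less.prems w by auto
  then have pos: "\<forall>j\<in>{1..m}. 0 < g m j" and ratio: "\<forall>j\<in>{1..<m}. g m (Suc j) \<le> p * g m j"
    and sum: "(\<Sum>j\<in>{1..m}. g m j) = 1"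
    by (simp_all add: sep_weights_def)
  have den: "0 < 1 - real m * g m m"
    using sep_weights_last_lt[OF p wm m] by simp
  have decr: "0 \<le> g m k - g m (Suc k)" if k: "k \<in> {2..<m}" for k
  proof -
    have "g m (Suc k) \<le> p * g m k"
      using ratio k by simp
    also have "\<dots> \<le> g m k"
      using pos k p by (intro mult_left_le_one_le) (auto simp: less_imp_le)
    finally show ?thesis
      by simp
  qed
  have IH: "0 < D_dual g k \<and> D_dual g k \<le> oa_B p k" if "k \<in> {2..<m}" for k
    using less.IH[of k] that less.prems by auto
  have "0 \<le> (\<Sum>k\<in>{2..<m}. D_dual g k * (g m k - g m (Suc k)))"
    using IH decr by (intro sum_nonneg) (simp add: less_imp_le)
  then have "0 < D_dual g m"
    using den m by (subst D_dual.simps) (simp add: divide_pos_pos)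
  moreover have "D_dual g m \<le> oa_B p m"
  proof -
    define T where "T = (\<Sum>k\<in>{2..<m}. (D_dual g k - oa_B p k) * (g m k - g m (Suc k)))"
    have "sep_form p m (g m) \<le> oa_C p m"
      using sep_form_le[OF p m _ ratio] pos sum by (simp add: less_imp_le)
    moreover have "T \<le> 0"
      unfolding T_def using IH decr by (intro sum_nonpos mult_nonpos_nonneg) auto
    ultimately have "real m * (sep_form p m (g m) + T) \<le> real m * oa_C p m"
      by (intro mult_left_mono) auto
    then have "real m * (sep_form p m (g m) - oa_B p m * g m m + T) \<le> oa_B p m * (1 - real m * g m m)"
      by (simp add: oa_B_def algebra_simps)
    with den show ?thesis
      by (simp add: D_dual_eq_sep_form[of g m p, OF sum] T_def pos_divide_le_eq)
  qed
  ultimately show ?case ..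
qed

lemma sum_power_card_less:
  fixes S :: "nat set" and p :: real
  assumes "finite S"
  shows "(\<Sum>i\<in>S. p ^ card {j\<in>S. j < i}) = (\<Sum>k<card S. p ^ k)"
  using assms
proof (induction S rule: finite_linorder_max_induct)
  case (insert b A)
  have "{j \<in> insert b A. j < i} = {j\<in>A. j < i}" if "i \<in> A" for i
    using insert that by auto
  moreover have "{j \<in> insert b A. j < b} = A" "b \<notin> A"
    using insert by auto
  ultimately show ?case
    using insert by (simp add: add.commute)
qed simp

lemma f_OA_pos:
  assumes "0 < p" "p < 1" "finite S" "i \<in> S"
  shows "0 < f_OA p \<sigma> i S"
proof -
  have "p ^ card S < 1"
    using assms by (auto simp: power_less_one_iff card_gt_0_iff)
  with assms show ?thesis
    by (simp add: f_OA_def)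
qed

lemma sum_f_OA_id:
  assumes "0 < p" "p < 1" "finite S" "S \<noteq> {}"
  shows "(\<Sum>i\<in>S. f_OA p id i S) = 1"
proof -
  have "p ^ card S < 1"
    using assms by (auto simp: power_less_one_iff card_gt_0_iff)
  have "(\<Sum>i\<in>S. f_OA p id i S) = (1 - p) / (1 - p ^ card S) * (\<Sum>i\<in>S. p ^ card {j\<in>S. j < i})"
    by (simp add: f_OA_def local_rank_def sum_distrib_left)
  also have "\<dots> = 1"
    using assms \<open>p ^ card S < 1\<close> by (simp add: sum_power_card_less sum_gp_strict)
  finally show ?thesis .
qed

lemma separable_f_OA_id:
  assumes "0 < p" "p < 1"
  shows "separable_wrt p K (f_OA p id) id"
  unfolding separable_wrt_def
proof (intro ballI impI)
  fix S i i' assume S: "S \<in> choice_sets K" and i: "i \<in> S" and i': "i' \<in> S" and lt: "id i' < id i"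
  have fin: "finite S"
    using S by (auto simp: choice_sets_def intro: finite_subset)
  have "card {j\<in>S. j < i'} < card {j\<in>S. j < i}"
    using lt i' fin by (intro psubset_card_mono) auto
  then have "p ^ card {j\<in>S. j < i} \<le> p * p ^ card {j\<in>S. j < i'}"
    using assms power_decreasing[of "Suc (card {j\<in>S. j < i'})" "card {j\<in>S. j < i}" p] by simp
  moreover have "0 \<le> (1 - p) / (1 - p ^ card S)"
    using assms by (simp add: power_le_one)
  ultimately have "(1 - p) / (1 - p ^ card S) * p ^ card {j\<in>S. j < i}
      \<le> (1 - p) / (1 - p ^ card S) * (p * p ^ card {j\<in>S. j < i'})"
    by (rule mult_left_mono)
  also have "\<dots> = p * ((1 - p) / (1 - p ^ card S) * p ^ card {j\<in>S. j < i'})"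
    by (rule mult.left_commute)
  finally have "(1 - p) / (1 - p ^ card S) * p ^ card {j\<in>S. j < i}
      \<le> p * ((1 - p) / (1 - p ^ card S) * p ^ card {j\<in>S. j < i'})" .
  then show "f_OA p id i S \<le> p * f_OA p id i' S"
    using i i' by (simp add: f_OA_def local_rank_def)
qed

lemma in_Mp_f_OA_id:
  assumes "0 < p" "p < 1"
  shows "in_Mp p K (f_OA p id)"
proof -
  have S: "finite S" "S \<noteq> {}" if "S \<in> choice_sets K" for S
    using that by (auto simp: choice_sets_def intro: finite_subset)
  have "0 < f_OA p id i S \<longleftrightarrow> i \<in> S" if "S \<in> choice_sets K" for S i
    using f_OA_pos[OF assms S(1)[OF that]] by (auto simp: f_OA_def)
  moreover have "bij_betw id {1..K} {1..K}"
    by simp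
  ultimately show ?thesis
    using separable_f_OA_id[OF assms] sum_f_OA_id[OF assms S] unfolding in_Mp_def by blast
qed

lemma f_OA_id_interval:
  assumes "p \<noteq> 1" "j \<in> {1..m}"
  shows "f_OA p id j {1..m} = p ^ (j - 1) / geom_sum p m"
proof -
  have "{i\<in>{1..m}. id i < id j} = {1..<j}"
    using assms by auto
  with assms show ?thesis
    by (simp add: f_OA_def local_rank_def geom_sum_eq)
qed

lemma D_dual_f_OA_id:
  assumes p: "0 < p" "p < 1"
  shows "2 \<le> m \<Longrightarrow> D_dual (\<lambda>m j. f_OA p id j {1..m}) m = oa_B p m"
proof (induction m rule: less_induct)
  case (less m)
  define g where "g = (\<lambda>m j. f_OA p id j {1..m})"
  have w: "sep_weights p m (g m)"
    using sep_weights_restriction[OF in_Mp_f_OA_id[OF p] separable_f_OA_id[OF p], of m m] less.prems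
    by (simp add: g_def)
  then have sum: "(\<Sum>j\<in>{1..m}. g m j) = 1"
    by (simp add: sep_weights_def)
  have W: "0 < geom_sum p m"
    using p less.prems by (simp add: geom_sum_pos)
  have "sep_form p m (g m) = sep_form p m (\<lambda>j. 1 / geom_sum p m * p ^ (j - 1))"
  proof (rule sep_form_cong)
    fix j assume "j \<in> {1..m}"
    then show "g m j = 1 / geom_sum p m * p ^ (j - 1)"
      using f_OA_id_interval[of p j m] p by (simp add: g_def)
  qed
  also have "\<dots> = oa_C p m"
    unfolding sep_form_scale sep_form_geom[OF p less.prems] using W by simp
  finally have S: "sep_form p m (g m) = oa_C p m" .
  have IH: "D_dual g k = oa_B p k" if "k \<in> {2..<m}" for k
    unfolding g_def by (rule less.IH) (use that in auto)
  have T: "(\<Sum>k\<in>{2..<m}. (D_dual g k - oa_B p k) * (g m k - g m (Suc k))) = 0"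
    by (rule sum.neutral) (simp add: IH)
  have "D_dual g m = real m * (oa_C p m - oa_B p m * g m m) / (1 - real m * g m m)"
    using D_dual_eq_sep_form[of g m p, OF sum] by (simp only: S T add_0_right)
  also have "\<dots> = oa_B p m"
    using sep_weights_last_lt[OF p w less.prems] by (simp add: oa_B_def field_simps)
  finally show ?case
    unfolding g_def .
qed

lemma C_const_eq_oa_C:
  assumes p: "0 < p" "p < 1" and K: "2 \<le> K"
  shows "C_const K p = oa_C p K"
proof -
  have "{2..K} = insert 2 {3..K}"
    using K by auto
  then have oa_C_K: "oa_C p K = (1 + p) / (1 - p) + (\<Sum>j\<in>{3..K}. p ^ (j - 1) / dgeom_sum p (j - 1) / (1 - p))"
    by (simp add: oa_C_def dgeom_sum_def add_divide_distrib sum_divide_distrib)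
  have "(\<Sum>r\<in>{1..K-2}. (1 - p) * p ^ (K - r) /
        (real (K - r) * p ^ (K - r + 1) - real (K - r + 1) * p ^ (K - r) + 1))
      = (\<Sum>j\<in>{3..K}. p ^ (j - 1) / dgeom_sum p (j - 1) / (1 - p))"
  proof (rule sum.reindex_bij_witness[where i = "\<lambda>j. K - j + 1" and j = "\<lambda>r. K - r + 1"])
    fix r assume r: "r \<in> {1..K-2}"
    define n where "n = K - r"
    have n: "K - r + 1 - 1 = n" "2 \<le> n"
      using r K by (auto simp: n_def)
    have "(1 - p) * p ^ n / ((1 - p)\<^sup>2 * dgeom_sum p n) = p ^ n / dgeom_sum p n / (1 - p)"
      using p by (simp add: power2_eq_square)
    then show "p ^ (K - r + 1 - 1) / dgeom_sum p (K - r + 1 - 1) / (1 - p) =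
      (1 - p) * p ^ (K - r) / (real (K - r) * p ^ (K - r + 1) - real (K - r + 1) * p ^ (K - r) + 1)"
      unfolding n(1) n_def[symmetric] dgeom_sum_closed_form[symmetric] by simp
  qed (use K in auto)
  then show ?thesis
    unfolding C_const_def oa_C_K by simp
qed

lemma sum_D_bounds:
  assumes p: "0 < p" "p < 1" and K: "2 \<le> K" and f: "in_Mp p K f" "separable_wrt p K f id"
  shows "0 < (\<Sum>r\<in>{1..K-1}. D K f r) \<and> (\<Sum>r\<in>{1..K-1}. D K f r) \<le> oa_C p K"
  using D_dual_bounds[OF p, of K "\<lambda>m j. f j {1..m}" K] sep_weights_restriction[OF f] K
  unfolding sum_D_eq_D_dual[OF K] oa_B_def by (auto simp: divide_le_eq mult.commute)

lemma sum_D_f_OA_id: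
  assumes p: "0 < p" "p < 1" and K: "2 \<le> K"
  shows "(\<Sum>r\<in>{1..K-1}. D K (f_OA p id) r) = oa_C p K"
  using K unfolding sum_D_eq_D_dual[OF K] D_dual_f_OA_id[OF p K] oa_B_def by simp

theorem mainTheorem5:
  fixes K :: nat and p :: real
  assumes "2 \<le> K" and "0 < p" and "p < 1"
  shows "(\<forall>f. in_Mp p K f \<and> separable_wrt p K f id \<longrightarrow>
            (\<Sum>r\<in>{1..K-1}. D K f r) \<le> C_const K p)
    \<and> (\<Sum>r\<in>{1..K-1}. D K (f_OA p id) r) = C_const K p
    \<and> in_Mp p K (f_OA p id) \<and> separable_wrt p K (f_OA p id) id
    \<and> (\<forall>f. in_Mp p K f \<and> separable_wrt p K f id \<longrightarrow> I_N p K (f_OA p id) \<le> I_N p K f)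
    \<and> I_N p K (f_OA p id) = ln (1 / p) / C_const K p
    \<and> ln (1 / p) / C_const K p =
        (1 - p) * ln (1 / p) /
        (1 + (\<Sum>j\<in>{2..K}. p ^ (j - 1) / (\<Sum>m\<in>{1..j-1}. real m * p ^ (m - 1))))"
proof -
  note K = assms(1) and p = assms(2,3)
  have C: "C_const K p = oa_C p K"
    by (rule C_const_eq_oa_C[OF p K])
  have OA: "(\<Sum>r\<in>{1..K-1}. D K (f_OA p id) r) = C_const K p"
    unfolding C by (rule sum_D_f_OA_id[OF p K])
  have I_OA: "I_N p K (f_OA p id) = ln (1 / p) / C_const K p"
    unfolding I_N_def OA ..
  have "I_N p K (f_OA p id) \<le> I_N p K f" if "in_Mp p K f \<and> separable_wrt p K f id" for f
    using sum_D_bounds[OF p K, of f] that p unfolding I_OA C unfolding I_N_def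
    by (intro divide_left_mono mult_pos_pos) auto
  moreover have "ln (1 / p) / C_const K p = (1 - p) * ln (1 / p) /
      (1 + (\<Sum>j\<in>{2..K}. p ^ (j - 1) / (\<Sum>m\<in>{1..j-1}. real m * p ^ (m - 1))))"
    by (simp add: C oa_C_def dgeom_sum_def mult.commute)
  ultimately show ?thesis
    using sum_D_bounds[OF p K] OA I_OA in_Mp_f_OA_id[OF p] separable_f_OA_id[OF p]
    unfolding C by blast
qed

end
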